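(* Let $T:l_\infty\to l_\infty$ be a continuous positive linear map with adjoint $T^*$. Then the set $\Delta(T^* )=\{p\in\Delta: p\text{ is an eigenvector of }T^*\}$ is nonempty and weak$^\star$-closed.
   Context: $l_\infty$: real bounded sequences indexed by $\mathbb N$ with sup norm. $ba(\mathbb N)$: norm dual of $l_\infty$ (bounded finitely additive signed measures on $2^{\mathbb N}$), pairing $\langle x,\mu\rangle$, weak$^\star$ topology. The adjoint $T^*:ba(\mathbb N)\to ba(\mathbb N)$ is defined by $\langle x,T^*(\mu)\rangle=\langle T(x),\mu\rangle$ for all $x,\mu$. $\Delta$ is the set of finitely additive probability measures on $2^{\mathbb N}$, i.e. $\mu\in ba(\mathbb N)$ with $\mu\ge0$ and $\mu(\mathbb N)=1$. An eigenvector of $T^*$ is a nonzero $\mu\in ba(\mathbb N)$ such that $T^*(\mu)=\lambda\mu$ for some $\lambda\in\mathbb R$. *)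

theory Defs
  imports "HOL-Analysis.Analysis"
begin

text \<open>l_infinity: bounded real sequences with sup norm, realised as bounded continuous
  functions on the discrete space nat.  Its norm dual ba(N) is the type of bounded
  linear functionals on it.\<close>

type_synonym linf = "nat \<Rightarrow>\<^sub>C real"
type_synonym ba = "linf \<Rightarrow>\<^sub>L real"

definition ind :: "nat set \<Rightarrow> linf" where
  "ind A = Bcontfun (indicator A)"

definition ba_measure :: "ba \<Rightarrow> nat set \<Rightarrow> real" where
  "ba_measure \<mu> A = blinfun_apply \<mu> (ind A)"

definition adjoint_op :: "(linf \<Rightarrow>\<^sub>L linf) \<Rightarrow> ba \<Rightarrow> ba" where
  "adjoint_op T \<mu> = \<mu> o\<^sub>L T"

definition positive_op :: "(linf \<Rightarrow>\<^sub>L linf) \<Rightarrow> bool" where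
  "positive_op T \<longleftrightarrow>
     (\<forall>x. (\<forall>n. 0 \<le> apply_bcontfun x n) \<longrightarrow> (\<forall>n. 0 \<le> apply_bcontfun (blinfun_apply T x) n))"

definition Delta :: "ba set" where
  "Delta = {\<mu>. (\<forall>A. 0 \<le> ba_measure \<mu> A) \<and> ba_measure \<mu> UNIV = 1}"

definition eigenvector_of :: "(ba \<Rightarrow> ba) \<Rightarrow> ba \<Rightarrow> bool" where
  "eigenvector_of S \<mu> \<longleftrightarrow> \<mu> \<noteq> 0 \<and> (\<exists>c::real. S \<mu> = c *\<^sub>R \<mu>)"

definition Delta_eig :: "(linf \<Rightarrow>\<^sub>L linf) \<Rightarrow> ba set" where
  "Delta_eig T = {p \<in> Delta. eigenvector_of (adjoint_op T) p}"

definition weak_star_topology :: "ba topology" where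
  "weak_star_topology =
     pullback_topology UNIV (\<lambda>\<mu> x. blinfun_apply \<mu> x) (product_topology (\<lambda>_. euclideanreal) UNIV)"

end

theory Submission
  imports Defs
begin

text \<open>
  A positive operator is dominated by its values on the constant sequence 1:
  \<open>|T^k x| \<le> \<parallel>x\<parallel> T^k 1\<close>. Let r be the infimum of those \<open>\<mu> > 0\<close> for which the Neumann
  sums \<open>\<Sum>k<N. T^k 1 / \<mu>^k\<close> are bounded uniformly in N and in the coordinate. If they
  stayed bounded at r itself, positivity would give \<open>T^k 1 = O(q^k)\<close> for some \<open>q < r\<close>,
  contradicting minimality; so for \<open>\<mu>\<close> just above r they become arbitrarily large at some
  coordinate m. Normalising \<open>x \<mapsto> (\<Sum>k<N. T^k x / \<mu>^k)(m)\<close> by its value at 1 then gives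
  positive functionals \<open>\<psi>\<close> with \<open>\<psi>(1) = 1\<close> and \<open>|\<psi>(Tx) - r \<psi>(x)| \<le> \<epsilon> \<parallel>x\<parallel>\<close> for
  arbitrarily small \<open>\<epsilon>\<close>. These sets of approximate eigenstates are closed and nested inside
  the compact product of the intervals \<open>[-\<parallel>x\<parallel>, \<parallel>x\<parallel>]\<close>, so they share a point: an element
  of Delta that is an eigenvector of the adjoint with eigenvalue r. Weak-star closedness holds
  because \<open>p \<in> Delta\<close> is an eigenvector iff \<open>p(Tx) = p(T1) p(x)\<close> for all x, a family of
  weak-star closed conditions.
\<close>

lemma ind_apply [simp]: "ind A n = indicator A n"
proof -
  have "(indicator A :: nat \<Rightarrow> real) \<in> bcontfun"
    by (rule bcontfun_normI[where b=1]) (auto simp: indicator_def)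
  then show ?thesis by (simp add: ind_def Bcontfun_inverse)
qed

lemma apply_bcontfun_sum: "apply_bcontfun (sum f A) n = (\<Sum>a\<in>A. apply_bcontfun (f a) n)"
  for f :: "'a \<Rightarrow> ('b::topological_space \<Rightarrow>\<^sub>C 'c::real_normed_vector)"
  by (induction A rule: infinite_finite_induct) auto

lemma abs_apply_le_norm: "\<bar>apply_bcontfun x n\<bar> \<le> norm x"
  for x :: "'a::topological_space \<Rightarrow>\<^sub>C real"
  using norm_bounded[of x n] by simp

definition one_seq :: linf where "one_seq = ind UNIV"

lemma one_seq_apply [simp]: "one_seq n = 1"
  by (simp add: one_seq_def)

definition nonneg :: "linf \<Rightarrow> bool" where
  "nonneg x \<longleftrightarrow> (\<forall>n. 0 \<le> x n)"

lemma positive_op_iff: "positive_op T \<longleftrightarrow> (\<forall>x. nonneg x \<longrightarrow> nonneg (T x))"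
  by (simp add: positive_op_def nonneg_def)

section \<open>Weak-star closedness\<close>

lemma topspace_weak_star_topology [simp]: "topspace weak_star_topology = UNIV"
  by (simp add: weak_star_topology_def topspace_pullback_topology)

lemma continuous_map_weak_star_apply:
  "continuous_map weak_star_topology euclideanreal (\<lambda>p. blinfun_apply p x)"
proof -
  have "continuous_map weak_star_topology euclideanreal ((\<lambda>f. f x) \<circ> blinfun_apply)"
    unfolding weak_star_topology_def
    by (intro continuous_map_pullback continuous_map_product_projection) simp
  then show ?thesis by (simp add: o_def)
qed

lemma mem_Delta_iff: "p \<in> Delta \<longleftrightarrow> (\<forall>A. 0 \<le> p (ind A)) \<and> p one_seq = 1"
  unfolding Delta_def ba_measure_def one_seq_def by (rule mem_Collect_eq)

lemma Delta_eig_eq: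
  "Delta_eig T = {p \<in> Delta. \<forall>x. p (T x) = p (T one_seq) * p x}"
proof (intro set_eqI iffI)
  fix p assume "p \<in> Delta_eig T"
  then obtain c where D: "p \<in> Delta" and c: "p o\<^sub>L T = c *\<^sub>R p"
    by (auto simp: Delta_eig_def eigenvector_of_def adjoint_op_def)
  have "p (T x) = c * p x" for x
    using arg_cong[OF c, of "\<lambda>f. f x"] by (simp add: scaleR_blinfun.rep_eq)
  moreover have "p one_seq = 1" using D by (simp add: mem_Delta_iff)
  ultimately show "p \<in> {p \<in> Delta. \<forall>x. p (T x) = p (T one_seq) * p x}"
    using D by simp
next
  fix p assume "p \<in> {p \<in> Delta. \<forall>x. p (T x) = p (T one_seq) * p x}"
  then have D: "p \<in> Delta" and ev: "\<And>x. p (T x) = p (T one_seq) * p x"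
    unfolding mem_Collect_eq by blast+
  have "p o\<^sub>L T = p (T one_seq) *\<^sub>R p"
  proof (rule blinfun_eqI)
    show "(p o\<^sub>L T) x = (p (T one_seq) *\<^sub>R p) x" for x
      using ev[of x] by (simp add: scaleR_blinfun.rep_eq)
  qed
  moreover have "p \<noteq> 0" using D by (auto simp: mem_Delta_iff)
  ultimately show "p \<in> Delta_eig T"
    using D by (auto simp: Delta_eig_def eigenvector_of_def adjoint_op_def)
qed

lemma closedin_Delta_eig: "closedin weak_star_topology (Delta_eig T)"
proof -
  let ?W = weak_star_topology
  have pos: "closedin ?W {p :: ba. 0 \<le> p (ind A)}" for A
    using closedin_continuous_map_preimage[OF continuous_map_weak_star_apply, of "{0..}"] by simp
  have unit: "closedin ?W {p :: ba. p one_seq = 1}"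
    using closedin_continuous_map_preimage[OF continuous_map_weak_star_apply, of "{1}"] by simp
  have eig: "closedin ?W {p :: ba. p (T x) = p (T one_seq) * p x}" for x
    using closedin_continuous_maps_eq[OF Hausdorff_space_euclidean continuous_map_weak_star_apply
        continuous_map_real_mult[OF continuous_map_weak_star_apply continuous_map_weak_star_apply]]
    by simp
  have "Delta_eig T = (\<Inter>A. {p :: ba. 0 \<le> p (ind A)}) \<inter> {p :: ba. p one_seq = 1} \<inter>
      (\<Inter>x. {p :: ba. p (T x) = p (T one_seq) * p x})"
    unfolding Delta_eig_eq mem_Delta_iff by blast
  then show ?thesis
    by (simp only:) (intro closedin_Int closedin_INT pos unit eig; simp)
qed

section \<open>States and approximate eigenstates\<close>

definition states :: "(linf \<Rightarrow> real) set" where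
  "states = {\<psi>. linear \<psi> \<and> (\<forall>x. nonneg x \<longrightarrow> 0 \<le> \<psi> x) \<and> \<psi> one_seq = 1}"

lemma abs_state_le_norm:
  assumes "\<psi> \<in> states"
  shows "\<bar>\<psi> x\<bar> \<le> norm x"
proof -
  from assms have lin: "linear \<psi>" and pos: "\<And>x. nonneg x \<Longrightarrow> 0 \<le> \<psi> x" and unit: "\<psi> one_seq = 1"
    by (auto simp: states_def)
  have "0 \<le> norm x - x n" "0 \<le> norm x + x n" for n
    using abs_apply_le_norm[of x n] by (auto simp: abs_le_iff)
  then have "nonneg (norm x *\<^sub>R one_seq - x)" "nonneg (norm x *\<^sub>R one_seq + x)"
    by (simp_all add: nonneg_def)
  then have "0 \<le> \<psi> (norm x *\<^sub>R one_seq - x)" "0 \<le> \<psi> (norm x *\<^sub>R one_seq + x)"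
    using pos by blast+
  then have "0 \<le> norm x - \<psi> x" "0 \<le> norm x + \<psi> x"
    using unit by (simp_all add: linear_diff[OF lin] linear_add[OF lin] linear_scale[OF lin])
  then show ?thesis by linarith
qed

lemma Blinfun_state_in_Delta_eig:
  fixes T :: "linf \<Rightarrow>\<^sub>L linf"
  assumes "\<psi> \<in> states" and ev: "\<And>x. \<psi> (T x) = c * \<psi> x"
  shows "Blinfun \<psi> \<in> Delta_eig T"
proof -
  from assms(1) have lin: "linear \<psi>" and pos: "\<And>x. nonneg x \<Longrightarrow> 0 \<le> \<psi> x" and unit: "\<psi> one_seq = 1"
    by (auto simp: states_def)
  have "bounded_linear \<psi>"
    by (rule bounded_linear_intro[where K=1])
       (use abs_state_le_norm[OF assms(1)] in \<open>simp_all add: linear_add[OF lin] linear_scale[OF lin]\<close>)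
  then have apply_eq: "blinfun_apply (Blinfun \<psi>) = \<psi>"
    by (rule bounded_linear_Blinfun_apply)
  show ?thesis
    unfolding Delta_eig_eq mem_Delta_iff mem_Collect_eq apply_eq
  proof (intro conjI allI)
    show "0 \<le> \<psi> (ind A)" for A
      by (rule pos) (simp add: nonneg_def)
    show "\<psi> (T x) = \<psi> (T one_seq) * \<psi> x" for x
      using ev[of x] ev[of one_seq] unit by simp
  qed (fact unit)
qed

definition approx_eigenstates :: "(linf \<Rightarrow>\<^sub>L linf) \<Rightarrow> real \<Rightarrow> real \<Rightarrow> (linf \<Rightarrow> real) set" where
  "approx_eigenstates T c e = {\<psi> \<in> states. \<forall>x. \<bar>\<psi> (T x) - c * \<psi> x\<bar> \<le> e * norm x}"

lemma approx_eigenstates_mono: "e \<le> e' \<Longrightarrow> approx_eigenstates T c e \<subseteq> approx_eigenstates T c e'"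
  unfolding approx_eigenstates_def by (auto intro: order_trans[OF _ mult_right_mono[OF _ norm_ge_zero]])

lemma approx_eigenstates_shift:
  assumes "\<psi> \<in> approx_eigenstates T \<mu> e" and "\<bar>\<mu> - c\<bar> \<le> d"
  shows "\<psi> \<in> approx_eigenstates T c (e + d)"
proof -
  have "\<bar>\<psi> (T x) - c * \<psi> x\<bar> \<le> (e + d) * norm x" for x
  proof -
    have "\<bar>(\<mu> - c) * \<psi> x\<bar> \<le> d * norm x"
      unfolding abs_mult
      by (rule mult_mono) (use assms abs_state_le_norm in \<open>auto simp: approx_eigenstates_def\<close>)
    moreover have "\<bar>\<psi> (T x) - \<mu> * \<psi> x\<bar> \<le> e * norm x"
      using assms(1) by (simp add: approx_eigenstates_def)
    ultimately show ?thesis by (simp add: algebra_simps abs_le_iff)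
  qed
  then show ?thesis using assms(1) by (simp add: approx_eigenstates_def)
qed

lemma closedin_approx_eigenstates: "closedin (powertop_real UNIV) (approx_eigenstates T c e)"
proof -
  let ?P = "powertop_real UNIV"
  have proj: "continuous_map ?P euclideanreal (\<lambda>\<psi>. \<psi> x)" for x
    by (rule continuous_map_product_projection) simp
  have add: "closedin ?P {\<psi>. \<psi> (x + y) = \<psi> x + \<psi> y}" for x y
    using closedin_continuous_maps_eq[OF Hausdorff_space_euclidean proj continuous_map_add[OF proj proj]]
    by simp
  have scale: "closedin ?P {\<psi>. \<psi> (a *\<^sub>R x) = a * \<psi> x}" for a x
    using closedin_continuous_maps_eq[OF Hausdorff_space_euclidean proj
        continuous_map_real_mult[OF continuous_map_const[THEN iffD2] proj]]
    by simp
  have pos: "closedin ?P {\<psi>. nonneg x \<longrightarrow> 0 \<le> \<psi> x}" for x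
    using closedin_continuous_map_preimage[OF proj, of "{0..}" x] closedin_topspace[of ?P]
    by (cases "nonneg x") simp_all
  have unit: "closedin ?P {\<psi>. \<psi> one_seq = 1}"
    using closedin_continuous_map_preimage[OF proj, of "{1}"] by simp
  have eig: "closedin ?P {\<psi>. \<bar>\<psi> (T x) - c * \<psi> x\<bar> \<le> e * norm x}" for x
  proof -
    have "{\<psi>. \<bar>\<psi> (T x) - c * \<psi> x\<bar> \<le> e * norm x} =
        {\<psi> \<in> topspace ?P. \<psi> (T x) - c * \<psi> x \<in> {-(e * norm x)..e * norm x}}"
      by (auto simp: abs_le_iff)
    then show ?thesis
      using closedin_continuous_map_preimage[OF continuous_map_diff[OF proj[of "T x"]
          continuous_map_real_mult_left[OF proj[of x], of c]], of "{-(e * norm x)..e * norm x}"]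
      by simp
  qed
  have "approx_eigenstates T c e = (\<Inter>x. \<Inter>y. {\<psi>. \<psi> (x + y) = \<psi> x + \<psi> y}) \<inter>
      (\<Inter>a. \<Inter>x. {\<psi>. \<psi> (a *\<^sub>R x) = a * \<psi> x}) \<inter> (\<Inter>x. {\<psi>. nonneg x \<longrightarrow> 0 \<le> \<psi> x}) \<inter>
      {\<psi>. \<psi> one_seq = 1} \<inter> (\<Inter>x. {\<psi>. \<bar>\<psi> (T x) - c * \<psi> x\<bar> \<le> e * norm x})"
    unfolding approx_eigenstates_def states_def linear_iff by force
  then show ?thesis
    by (simp only:) (intro closedin_Int closedin_INT add scale pos unit eig; simp)
qed

lemma compactin_decseq_Inter_nonempty:
  assumes "compactin X K" and "\<And>n. closedin X (A n)" and "\<And>n. A n \<subseteq> K"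
    and "\<And>n. A n \<noteq> {}" and "decseq A"
  shows "(\<Inter>n. A n) \<noteq> {}"
proof -
  have fip: "\<And>\<U>. (\<forall>C\<in>\<U>. closedin X C) \<and> (\<forall>\<F>. finite \<F> \<and> \<F> \<subseteq> \<U> \<longrightarrow> K \<inter> \<Inter>\<F> \<noteq> {})
      \<Longrightarrow> K \<inter> \<Inter>\<U> \<noteq> {}"
    using assms(1) unfolding compactin_fip by blast
  have "K \<inter> \<Inter>(range A) \<noteq> {}"
  proof (rule fip, intro conjI allI impI ballI)
    fix C assume "C \<in> range A"
    then show "closedin X C"
      using assms(2) by auto
  next
    fix \<F> assume "finite \<F> \<and> \<F> \<subseteq> range A"
    then obtain I where "finite I" and \<F>: "\<F> = A ` I"
      using finite_subset_image[of \<F> A UNIV] by auto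
    then obtain n where "\<forall>i\<in>I. i \<le> n"
      using finite_nat_set_iff_bounded_le by auto
    then have "A n \<subseteq> K \<inter> \<Inter>\<F>"
      using assms(3) decseqD[OF assms(5)] \<F> by blast
    then show "K \<inter> \<Inter>\<F> \<noteq> {}"
      using assms(4)[of n] by blast
  qed
  then show ?thesis by blast
qed

text \<open>Tychonoff: states take values in the compact product of the intervals [-norm x, norm x].\<close>
lemma eigenstate_exists:
  assumes "\<And>e. 0 < e \<Longrightarrow> approx_eigenstates T c e \<noteq> {}"
  shows "\<exists>\<psi>\<in>states. \<forall>x. \<psi> (T x) = c * \<psi> x"
proof -
  define A where "A n = approx_eigenstates T c (1 / Suc n)" for n
  define K where "K = PiE UNIV (\<lambda>x::linf. {-norm x..norm x})"
  have "(\<Inter>n. A n) \<noteq> {}"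
  proof (rule compactin_decseq_Inter_nonempty)
    show "compactin (powertop_real UNIV) K"
      by (simp add: K_def compactin_PiE)
    show "closedin (powertop_real UNIV) (A n)" for n
      by (simp add: A_def closedin_approx_eigenstates)
    show "A n \<noteq> {}" for n
      unfolding A_def by (rule assms) simp
    show "decseq A"
      unfolding decseq_def A_def by (auto intro!: approx_eigenstates_mono simp: frac_le)
    show "A n \<subseteq> K" for n
    proof
      fix \<psi> assume "\<psi> \<in> A n"
      then have "\<psi> \<in> states" by (simp add: A_def approx_eigenstates_def)
      then have "\<psi> x \<in> {-norm x..norm x}" for x
        using abs_state_le_norm[of \<psi> x] by (auto simp: abs_le_iff)
      then show "\<psi> \<in> K" by (simp add: K_def PiE_iff)
    qed
  qed
  then obtain \<psi> where \<psi>: "\<psi> \<in> A n" for n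
    by blast
  have "\<psi> (T x) = c * \<psi> x" for x
  proof -
    have "\<bar>\<psi> (T x) - c * \<psi> x\<bar> \<le> norm x / Suc n" for n
      using \<psi>[of n] by (simp add: A_def approx_eigenstates_def)
    then have "\<bar>\<psi> (T x) - c * \<psi> x\<bar> \<le> 0"
      by (intro LIMSEQ_le_const[OF LIMSEQ_Suc[OF lim_const_over_n]]) blast
    then show ?thesis by simp
  qed
  moreover have "\<psi> \<in> states"
    using \<psi>[of 0] by (simp add: A_def approx_eigenstates_def)
  ultimately show ?thesis by blast
qed

section \<open>Neumann sums of a positive operator\<close>

fun op_power :: "(linf \<Rightarrow>\<^sub>L linf) \<Rightarrow> nat \<Rightarrow> linf \<Rightarrow>\<^sub>L linf" where
  "op_power T 0 = id_blinfun"
| "op_power T (Suc k) = op_power T k o\<^sub>L T"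

lemma op_power_Suc': "op_power T (Suc k) x = T (op_power T k x)"
  by (induction k arbitrary: x) simp_all

lemma nonneg_op_power:
  assumes "positive_op T" and "nonneg x"
  shows "nonneg (op_power T k x)"
  by (induction k) (use assms in \<open>simp_all add: op_power_Suc' positive_op_iff del: op_power.simps(2)\<close>)

lemma op_power_mono:
  fixes x y :: linf
  assumes "positive_op T" and "\<And>n. x n \<le> y n"
  shows "op_power T k x m \<le> op_power T k y m"
  using nonneg_op_power[OF assms(1), of "y - x" k] assms(2)
  by (simp add: nonneg_def blinfun.diff_right)

lemma abs_op_power_le:
  assumes "positive_op T"
  shows "\<bar>op_power T k x m\<bar> \<le> norm x * op_power T k one_seq m"
proof -
  have "x n \<le> (norm x *\<^sub>R one_seq) n" "(- x) n \<le> (norm x *\<^sub>R one_seq) n" for n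
    using abs_apply_le_norm[of x n] by (auto simp: abs_le_iff)
  from this[THEN op_power_mono[OF assms]] show ?thesis
    by (auto simp: abs_le_iff blinfun.minus_right blinfun.scaleR_right)
qed

lemma op_power_one_le:
  assumes "positive_op T"
  shows "op_power T k one_seq m \<le> norm (T one_seq) ^ k"
proof (induction k arbitrary: m)
  case 0
  then show ?case by simp
next
  case (Suc k)
  have "T one_seq n \<le> (norm (T one_seq) *\<^sub>R one_seq) n" for n
    using abs_apply_le_norm[of "T one_seq" n] by simp
  then have "op_power T (Suc k) one_seq m \<le> op_power T k (norm (T one_seq) *\<^sub>R one_seq) m"
    using op_power_mono[OF assms] by simp
  also have "\<dots> = norm (T one_seq) * op_power T k one_seq m"
    by (simp add: blinfun.scaleR_right)
  also have "\<dots> \<le> norm (T one_seq) ^ Suc k"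
    using Suc.IH by (simp add: mult_left_mono)
  finally show ?case .
qed

definition neumann_op :: "(linf \<Rightarrow>\<^sub>L linf) \<Rightarrow> real \<Rightarrow> nat \<Rightarrow> linf \<Rightarrow>\<^sub>L linf" where
  "neumann_op T \<mu> N = (\<Sum>k<N. (1 / \<mu> ^ k) *\<^sub>R op_power T k)"

lemma neumann_op_apply: "neumann_op T \<mu> N x m = (\<Sum>k<N. op_power T k x m / \<mu> ^ k)"
  by (simp add: neumann_op_def blinfun.sum_left apply_bcontfun_sum scaleR_blinfun.rep_eq)

lemma neumann_op_Suc:
  "neumann_op T \<mu> (Suc N) x m = neumann_op T \<mu> N x m + op_power T N x m / \<mu> ^ N"
  by (simp add: neumann_op_apply)

lemma neumann_op_Suc_0: "neumann_op T \<mu> (Suc 0) x = x"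
  by (rule bcontfun_eqI) (simp add: neumann_op_apply)

lemma neumann_op_shift:
  assumes "\<mu> \<noteq> 0"
  shows "neumann_op T \<mu> N (T x) m = \<mu> * (neumann_op T \<mu> (Suc N) x m - x m)"
proof -
  have "neumann_op T \<mu> N (T x) m = (\<Sum>k<N. op_power T (Suc k) x m / \<mu> ^ k)"
    by (simp add: neumann_op_apply)
  also have "\<dots> = \<mu> * (\<Sum>k<N. op_power T (Suc k) x m / \<mu> ^ Suc k)"
    unfolding sum_distrib_left by (rule sum.cong) (use assms in auto)
  also have "\<dots> = \<mu> * (neumann_op T \<mu> (Suc N) x m - x m)"
    unfolding neumann_op_apply sum.lessThan_Suc_shift by simp
  finally show ?thesis .
qed

lemma neumann_op_commute: "T (neumann_op T \<mu> N x) = neumann_op T \<mu> N (T x)"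
  by (simp add: neumann_op_def blinfun.sum_left blinfun.sum_right blinfun.scaleR_right
      scaleR_blinfun.rep_eq op_power_Suc'[symmetric])

lemma nonneg_neumann_op:
  assumes "positive_op T" and "0 < \<mu>" and "nonneg x"
  shows "nonneg (neumann_op T \<mu> N x)"
  using nonneg_op_power[OF assms(1,3)] assms(2)
  by (auto simp: nonneg_def neumann_op_apply intro!: sum_nonneg)

lemma neumann_op_one_mono:
  assumes "positive_op T" and "0 < \<mu>" and "N \<le> N'"
  shows "neumann_op T \<mu> N one_seq m \<le> neumann_op T \<mu> N' one_seq m"
  unfolding neumann_op_apply
  using nonneg_op_power[OF assms(1), of one_seq] assms(2,3)
  by (intro sum_mono2) (auto simp: nonneg_def)

lemma neumann_op_one_antimono:
  assumes "positive_op T" and "0 < \<mu>" and "\<mu> \<le> \<mu>'"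
  shows "neumann_op T \<mu>' N one_seq m \<le> neumann_op T \<mu> N one_seq m"
  unfolding neumann_op_apply
  using nonneg_op_power[OF assms(1), of one_seq] assms(2,3)
  by (intro sum_mono divide_left_mono power_mono mult_pos_pos zero_less_power) (auto simp: nonneg_def)

section \<open>The spectral radius\<close>

definition neumann_bounded :: "(linf \<Rightarrow>\<^sub>L linf) \<Rightarrow> real \<Rightarrow> bool" where
  "neumann_bounded T \<mu> \<longleftrightarrow> 0 < \<mu> \<and> (\<exists>M. \<forall>N m. neumann_op T \<mu> N one_seq m \<le> M)"

text \<open>For positive T this is the spectral radius of T; only the defining property is used.\<close>
definition spectral_radius :: "(linf \<Rightarrow>\<^sub>L linf) \<Rightarrow> real" where
  "spectral_radius T = Inf {\<mu>. neumann_bounded T \<mu>}"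

lemma neumann_bounded_geometric:
  assumes "\<And>k m. op_power T k one_seq m \<le> C * q ^ k" and "0 \<le> q" and "q < \<mu>"
  shows "neumann_bounded T \<mu>"
proof -
  have \<mu>: "0 < \<mu>" using assms(2,3) by linarith
  have C: "0 \<le> C" using assms(1)[of 0] by simp
  have q\<mu>: "0 \<le> q / \<mu>" "q / \<mu> < 1"
    using assms(2,3) \<mu> by auto
  have "neumann_op T \<mu> N one_seq m \<le> C * (1 / (1 - q / \<mu>))" for N m
  proof -
    have "neumann_op T \<mu> N one_seq m \<le> (\<Sum>k<N. C * (q / \<mu>) ^ k)"
      unfolding neumann_op_apply power_divide
      by (intro sum_mono) (use assms(1) \<mu> in \<open>auto simp: divide_right_mono\<close>)
    also have "\<dots> = C * ((1 - (q / \<mu>) ^ N) / (1 - q / \<mu>))"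
      using q\<mu> assms(3) by (simp add: sum_distrib_left[symmetric] sum_gp_strict)
    also have "\<dots> \<le> C * (1 / (1 - q / \<mu>))"
      using q\<mu> C by (intro mult_left_mono divide_right_mono) auto
    finally show ?thesis .
  qed
  then show ?thesis
    unfolding neumann_bounded_def using \<mu> by blast
qed

lemma neumann_bounded_mono:
  assumes "positive_op T" and "neumann_bounded T \<mu>" and "\<mu> \<le> \<mu>'"
  shows "neumann_bounded T \<mu>'"
  using assms neumann_op_one_antimono[OF assms(1)] unfolding neumann_bounded_def
  by (meson order_trans order_less_le_trans)

lemma
  assumes "positive_op T"
  shows spectral_radius_nonneg: "0 \<le> spectral_radius T"
    and neumann_bounded_above_spectral_radius: "spectral_radius T < \<mu> \<Longrightarrow> neumann_bounded T \<mu>"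
    and spectral_radius_le: "neumann_bounded T \<mu> \<Longrightarrow> spectral_radius T \<le> \<mu>"
proof -
  have "neumann_bounded T (norm (T one_seq) + 1)"
    by (rule neumann_bounded_geometric[where C = 1]) (use op_power_one_le[OF assms] in auto)
  then have ne: "{\<mu>. neumann_bounded T \<mu>} \<noteq> {}" by blast
  have bdd: "bdd_below {\<mu>. neumann_bounded T \<mu>}"
    by (rule bdd_belowI[where m = 0]) (simp add: neumann_bounded_def)
  show "0 \<le> spectral_radius T"
    unfolding spectral_radius_def by (rule cInf_greatest[OF ne]) (simp add: neumann_bounded_def)
  show "spectral_radius T \<le> \<mu>" if "neumann_bounded T \<mu>"
    unfolding spectral_radius_def by (rule cInf_lower) (use that bdd in auto)
  show "neumann_bounded T \<mu>" if "spectral_radius T < \<mu>"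
  proof -
    have "Inf {\<mu>. neumann_bounded T \<mu>} < \<mu>"
      using that by (simp add: spectral_radius_def)
    then obtain \<mu>' where "neumann_bounded T \<mu>'" "\<mu>' < \<mu>"
      using cInf_less_iff[OF ne bdd] by auto
    then show ?thesis
      using neumann_bounded_mono[OF assms] by auto
  qed
qed

lemma neumann_term_le_one:
  assumes "positive_op T" and "neumann_bounded T \<mu>"
  shows "\<exists>N'\<ge>N. op_power T N' one_seq m \<le> \<mu> ^ N'"
proof (rule ccontr)
  assume none: "\<not> ?thesis"
  obtain M where M: "\<And>N m. neumann_op T \<mu> N one_seq m \<le> M" and \<mu>: "0 < \<mu>"
    using assms(2) by (auto simp: neumann_bounded_def)
  have big: "1 \<le> op_power T k one_seq m / \<mu> ^ k" if "N \<le> k" for k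
  proof -
    have "\<mu> ^ k < op_power T k one_seq m"
      using none that by (metis not_le)
    then show ?thesis using \<mu> by (simp add: le_divide_eq)
  qed
  define K where "K = nat \<lceil>M\<rceil> + 1"
  have "real K \<le> (\<Sum>k\<in>{N..<N+K}. op_power T k one_seq m / \<mu> ^ k)"
    using sum_mono[of "{N..<N+K}" "\<lambda>_. 1" "\<lambda>k. op_power T k one_seq m / \<mu> ^ k"] big
    by simp
  also have "\<dots> \<le> neumann_op T \<mu> (N + K) one_seq m"
    unfolding neumann_op_apply using nonneg_op_power[OF assms(1), of one_seq] \<mu>
    by (intro sum_mono2) (auto simp: nonneg_def)
  also have "\<dots> \<le> M" by (rule M)
  finally show False
    unfolding K_def by linarith
qed

text \<open>With W the Neumann sums at r, boundedness by M gives T W \<le> q W for q = r (1 - 1/M);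
  iterating this from W = one_seq yields the geometric bound.\<close>
lemma op_power_one_le_geometric:
  assumes pos: "positive_op T" and r: "0 < r" and M: "1 \<le> M"
    and bound: "\<And>N m. neumann_op T r N one_seq m \<le> M"
  shows "op_power T j one_seq m \<le> M * (r * (1 - 1 / M)) ^ j"
proof -
  define q where "q = r * (1 - 1 / M)"
  define W where "W N = neumann_op T r N one_seq" for N
  have q: "0 \<le> q"
    using r M by (simp add: q_def)
  have step: "T (W N) n \<le> (q *\<^sub>R W (Suc N)) n" for N n
  proof -
    have "r * (W (Suc N) n / M) \<le> r * 1"
      using bound[of "Suc N" n] M r by (intro mult_left_mono) (simp_all add: W_def)
    then have "r * (W (Suc N) n - 1) \<le> q * W (Suc N) n"
      by (simp add: q_def algebra_simps)
    then show ?thesis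
      using r by (simp add: W_def neumann_op_commute neumann_op_shift)
  qed
  have decay: "op_power T j (W N) m \<le> q ^ j * W (N + j) m" for N
  proof (induction j arbitrary: N)
    case 0
    then show ?case by simp
  next
    case (Suc j)
    have "op_power T (Suc j) (W N) m \<le> op_power T j (q *\<^sub>R W (Suc N)) m"
      using op_power_mono[OF pos step] by simp
    also have "\<dots> \<le> q * (q ^ j * W (Suc N + j) m)"
      using Suc.IH[of "Suc N"] q by (simp add: blinfun.scaleR_right mult_left_mono)
    finally show ?case by simp
  qed
  have "op_power T j one_seq m \<le> q ^ j * W (1 + j) m"
    using decay[of 1] by (simp add: W_def neumann_op_Suc_0)
  also have "\<dots> \<le> q ^ j * M"
    using bound q by (intro mult_left_mono) (simp_all add: W_def)
  finally show ?thesis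
    by (simp add: q_def mult.commute)
qed

lemma neumann_unbounded_at_spectral_radius:
  assumes pos: "positive_op T" and r_pos: "0 < spectral_radius T"
  shows "\<exists>N m. M < neumann_op T (spectral_radius T) N one_seq m"
proof (rule ccontr)
  define r where "r = spectral_radius T"
  define M' where "M' = max M 1"
  define q where "q = r * (1 - 1 / M')"
  assume "\<not> ?thesis"
  then have "neumann_op T r N one_seq m \<le> M'" for N m
    by (simp add: r_def M'_def not_less le_max_iff_disj)
  then have "op_power T j one_seq m \<le> M' * q ^ j" for j m
    unfolding q_def using r_pos by (intro op_power_one_le_geometric[OF pos]) (simp_all add: r_def M'_def)
  moreover have q: "0 \<le> q" "q < r"
    using r_pos by (simp_all add: q_def r_def M'_def)
  ultimately have "neumann_bounded T ((q + r) / 2)"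
    by (intro neumann_bounded_geometric) auto
  then have "r \<le> (q + r) / 2"
    unfolding r_def by (rule spectral_radius_le[OF pos])
  then show False
    using q by simp
qed

lemma neumann_op_one_large_near_0:
  assumes pos: "positive_op T" and nz: "T one_seq m0 \<noteq> 0" and "0 < \<delta>"
  shows "\<exists>\<mu>. 0 < \<mu> \<and> \<mu> < \<delta> \<and> M \<le> neumann_op T \<mu> 2 one_seq m0"
proof -
  define c where "c = T one_seq m0"
  define M' where "M' = max M 1"
  define \<mu> where "\<mu> = min (\<delta> / 2) (c / (2 * M'))"
  have "0 \<le> c"
    using nonneg_op_power[OF pos, of one_seq 1] by (simp add: c_def nonneg_def)
  then have c: "0 < c"
    using nz by (simp add: c_def)
  have M': "1 \<le> M'"
    by (simp add: M'_def)
  have \<mu>: "0 < \<mu>" "\<mu> < \<delta>"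
    using c M' \<open>0 < \<delta>\<close> by (simp_all add: \<mu>_def)
  have "\<mu> \<le> c / (2 * M')"
    by (simp add: \<mu>_def)
  then have "2 * M' \<le> c / \<mu>"
    using \<mu> M' by (simp add: field_simps)
  moreover have "neumann_op T \<mu> 2 one_seq m0 = 1 + c / \<mu>"
    by (simp add: neumann_op_apply numeral_2_eq_2 c_def)
  ultimately have "M \<le> neumann_op T \<mu> 2 one_seq m0"
    using M' by (simp add: M'_def)
  then show ?thesis
    using \<mu> by blast
qed

lemma neumann_unbounded_near_spectral_radius:
  assumes pos: "positive_op T" and nz: "T one_seq m0 \<noteq> 0" and "0 < \<delta>"
  shows "\<exists>\<mu> N m. spectral_radius T < \<mu> \<and> \<mu> < spectral_radius T + \<delta> \<and> M \<le> neumann_op T \<mu> N one_seq m"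
proof (cases "spectral_radius T = 0")
  case True
  then show ?thesis
    using neumann_op_one_large_near_0[OF pos nz \<open>0 < \<delta>\<close>, of M] by auto
next
  case False
  define r where "r = spectral_radius T"
  have r: "0 < r"
    using False spectral_radius_nonneg[OF pos] by (simp add: r_def)
  show ?thesis
  proof (rule ccontr)
    assume "\<not> ?thesis"
    then have small: "neumann_op T \<mu> N one_seq m < M" if "r < \<mu>" "\<mu> < r + \<delta>" for \<mu> N m
      using that by (force simp: r_def not_le)
    have bounded_at_r: "neumann_op T r N one_seq m \<le> M" for N m
    proof (rule tendsto_upperbound)
      show "((\<lambda>\<mu>. neumann_op T \<mu> N one_seq m) \<longlongrightarrow> neumann_op T r N one_seq m) (at_right r)"
        unfolding neumann_op_apply using r by (auto intro!: tendsto_intros)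
      show "eventually (\<lambda>\<mu>. neumann_op T \<mu> N one_seq m \<le> M) (at_right r)"
        using eventually_at_right_real[of r "r + \<delta>"] \<open>0 < \<delta>\<close>
        by (auto elim!: eventually_mono intro: less_imp_le small)
    qed simp
    obtain N m where "M < neumann_op T r N one_seq m"
      using neumann_unbounded_at_spectral_radius[OF pos, of M] r unfolding r_def by blast
    then show False
      using bounded_at_r[of N m] by simp
  qed
qed

lemma neumann_state_in_approx_eigenstates:
  assumes pos: "positive_op T" and \<mu>: "0 < \<mu>" and S: "0 < neumann_op T \<mu> N one_seq m"
    and tail: "op_power T N one_seq m \<le> \<mu> ^ N"
  shows "(\<lambda>x. neumann_op T \<mu> N x m / neumann_op T \<mu> N one_seq m)
    \<in> approx_eigenstates T \<mu> (2 * \<mu> / neumann_op T \<mu> N one_seq m)"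
proof -
  define S where "S = neumann_op T \<mu> N one_seq m"
  have S_pos: "0 < S"
    using S by (simp add: S_def)
  have "(\<lambda>x. neumann_op T \<mu> N x m / S) \<in> states"
    unfolding states_def mem_Collect_eq linear_iff
    using nonneg_neumann_op[OF pos \<mu>] S_pos
    by (simp add: S_def nonneg_def blinfun.add_right blinfun.scaleR_right add_divide_distrib)
  moreover have "\<bar>neumann_op T \<mu> N (T x) m / S - \<mu> * (neumann_op T \<mu> N x m / S)\<bar> \<le> 2 * \<mu> / S * norm x"
    for x
  proof -
    have "\<bar>op_power T N x m\<bar> \<le> norm x * \<mu> ^ N"
      using abs_op_power_le[OF pos, of N x m] mult_left_mono[OF tail norm_ge_zero[of x]] by linarith
    then have "\<bar>op_power T N x m / \<mu> ^ N\<bar> \<le> norm x"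
      using \<mu> by (simp add: abs_div pos_divide_le_eq)
    then have D: "\<bar>op_power T N x m / \<mu> ^ N - x m\<bar> \<le> 2 * norm x"
      using abs_apply_le_norm[of x m] by linarith
    have "neumann_op T \<mu> N (T x) m / S - \<mu> * (neumann_op T \<mu> N x m / S)
        = \<mu> / S * (op_power T N x m / \<mu> ^ N - x m)"
      using \<mu> S_pos by (simp add: neumann_op_shift neumann_op_Suc field_simps)
    also have "\<bar>\<dots>\<bar> \<le> \<mu> / S * (2 * norm x)"
      unfolding abs_mult using D \<mu> S_pos by (intro mult_mono) auto
    finally show ?thesis by (simp add: ac_simps)
  qed
  ultimately show ?thesis
    unfolding approx_eigenstates_def S_def by simp
qed

lemma approx_eigenstates_spectral_radius_nonempty:
  assumes pos: "positive_op T" and nz: "T one_seq m0 \<noteq> 0" and e: "0 < e"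
  shows "approx_eigenstates T (spectral_radius T) e \<noteq> {}"
proof -
  define r where "r = spectral_radius T"
  have r: "0 \<le> r"
    using spectral_radius_nonneg[OF pos] by (simp add: r_def)
  have "\<exists>\<mu> N m. r < \<mu> \<and> \<mu> < r + min 1 (e / 2) \<and> 4 * (r + 1) / e \<le> neumann_op T \<mu> N one_seq m"
    using neumann_unbounded_near_spectral_radius[OF pos nz] e unfolding r_def by simp
  then obtain \<mu> N m where \<mu>: "r < \<mu>" "\<mu> < r + min 1 (e / 2)"
    and big: "4 * (r + 1) / e \<le> neumann_op T \<mu> N one_seq m"
    by blast
  obtain N' where "N \<le> N'" and tail: "op_power T N' one_seq m \<le> \<mu> ^ N'"
    using neumann_term_le_one[OF pos neumann_bounded_above_spectral_radius[OF pos]] \<mu>(1)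
    unfolding r_def by blast
  define S where "S = neumann_op T \<mu> N' one_seq m"
  have "neumann_op T \<mu> N one_seq m \<le> S"
    unfolding S_def using \<mu>(1) r by (intro neumann_op_one_mono[OF pos _ \<open>N \<le> N'\<close>]) simp
  moreover have "4 * (r + 1) \<le> e * neumann_op T \<mu> N one_seq m"
    using big e by (simp add: pos_divide_le_eq mult.commute)
  ultimately have S_big: "4 * (r + 1) \<le> e * S"
    using e by (meson mult_left_mono order_trans less_imp_le)
  have "0 < e * S"
    using S_big r by (simp add: order_less_le_trans[OF _ S_big])
  then have S_pos: "0 < S"
    using e by (simp add: zero_less_mult_iff)
  have "\<mu> < r + 1" "\<mu> - r \<le> e / 2"
    using \<mu> by linarith+
  moreover have "2 * \<mu> / S \<le> e / 2"
    using \<open>\<mu> < r + 1\<close> S_big S_pos by (simp add: field_simps)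
  ultimately have "2 * \<mu> / S + \<bar>\<mu> - r\<bar> \<le> e"
    using \<mu>(1) by simp
  moreover have "(\<lambda>x. neumann_op T \<mu> N' x m / S) \<in> approx_eigenstates T \<mu> (2 * \<mu> / S)"
    unfolding S_def using \<mu>(1) r S_pos
    by (intro neumann_state_in_approx_eigenstates[OF pos _ _ tail]) (simp_all add: S_def)
  ultimately have "(\<lambda>x. neumann_op T \<mu> N' x m / S) \<in> approx_eigenstates T r e"
    using approx_eigenstates_shift approx_eigenstates_mono by blast
  then show ?thesis
    unfolding r_def by blast
qed

lemma eval_in_states: "(\<lambda>x. apply_bcontfun x n) \<in> states"
  by (simp add: states_def linear_iff nonneg_def)

lemma positive_op_eq_0_if_one_seq:
  assumes "positive_op T" and "\<And>n. T one_seq n = 0"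
  shows "T x = 0"
proof (rule bcontfun_eqI)
  show "T x n = apply_bcontfun (0 :: linf) n" for n
    using abs_op_power_le[OF assms(1), of 1 x n] assms(2) by simp
qed

theorem lemma2:
  fixes T :: "linf \<Rightarrow>\<^sub>L linf"
  assumes "positive_op T"
  shows "Delta_eig T \<noteq> {} \<and> closedin weak_star_topology (Delta_eig T)"
proof
  have "\<exists>c. \<exists>\<psi>\<in>states. \<forall>x. \<psi> (T x) = c * \<psi> x"
  proof (cases "\<forall>n. T one_seq n = 0")
    case True
    then show ?thesis
      using positive_op_eq_0_if_one_seq[OF assms]
      by (intro exI[of _ 0] bexI[OF _ eval_in_states[of 0]]) simp
  next
    case False
    then obtain m0 where "T one_seq m0 \<noteq> 0" by blast
    then have "approx_eigenstates T (spectral_radius T) e \<noteq> {}" if "0 < e" for e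
      using approx_eigenstates_spectral_radius_nonempty[OF assms] that by blast
    then have "\<exists>\<psi>\<in>states. \<forall>x. \<psi> (T x) = spectral_radius T * \<psi> x"
      by (rule eigenstate_exists)
    then show ?thesis by blast
  qed
  then show "Delta_eig T \<noteq> {}"
    using Blinfun_state_in_Delta_eig by blast
  show "closedin weak_star_topology (Delta_eig T)"
    by (rule closedin_Delta_eig)
qed

end
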